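(* If a CSCA $\mathbf{a}$ is fractal, then $\mathbf{a}^n$ is fractal for every $n\in\mathbb{N}$, $n\ge 1$.
   Context: $\mathcal{P}$ is the ring of Laurent polynomials in $u$ over $\mathbb{Z}_2$, $\mathcal{R}$ its subring of palindromes ($p(u^{-1})=p(u)$). A CSCA is a $2\times2$ matrix with entries in $\mathcal{R}$ and determinant $1$. A CSCA $\mathbf{a}$ is periodic if $\mathbf{a}^p=\mathbb{1}$ for some $p\ge1$. It has gliders if there exist a non-zero $\xi\in\mathcal{P}^2$ and an integer $k\neq0$ with $\mathbf{a}\xi=u^k\xi$. It is fractal if it is neither periodic nor has gliders. *)

theory Defs
  imports "HOL-Analysis.Analysis" "HOL-Library.Poly_Mapping" "HOL-Library.Z2"
begin

text \<open>Laurent polynomials in u over Z_2: finitely supported maps int => Z_2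
  (coefficient of u^i), with convolution product.\<close>
type_synonym lpoly = "int \<Rightarrow>\<^sub>0 bit"

definition upow :: "int \<Rightarrow> lpoly" where
  "upow k = Poly_Mapping.single k 1"

text \<open>Palindromes: p(u^-1) = p(u), i.e. coefficients symmetric about 0.\<close>
definition palindrome :: "lpoly \<Rightarrow> bool" where
  "palindrome p \<longleftrightarrow> (\<forall>i. Poly_Mapping.lookup p (- i) = Poly_Mapping.lookup p i)"

type_synonym lmat = "lpoly ^ 2 ^ 2"

definition csca :: "lmat \<Rightarrow> bool" where
  "csca a \<longleftrightarrow> (\<forall>i j. palindrome (a $ i $ j)) \<and> det a = 1"

definition mpow :: "lmat \<Rightarrow> nat \<Rightarrow> lmat" where
  "mpow a n = ((\<lambda>m. a ** m) ^^ n) (mat 1)"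

definition periodic :: "lmat \<Rightarrow> bool" where
  "periodic a \<longleftrightarrow> (\<exists>p::nat. p \<ge> 1 \<and> mpow a p = mat 1)"

definition has_gliders :: "lmat \<Rightarrow> bool" where
  "has_gliders a \<longleftrightarrow> (\<exists>(\<xi>::lpoly ^ 2) (k::int). \<xi> \<noteq> 0 \<and> k \<noteq> 0 \<and> a *v \<xi> = upow k *s \<xi>)"

definition fractal :: "lmat \<Rightarrow> bool" where
  "fractal a \<longleftrightarrow> \<not> periodic a \<and> \<not> has_gliders a"

end

theory Submission
  imports Defs
begin

text \<open>Suppose \<open>a\<^sup>n \<xi> = u\<^sup>k \<xi>\<close> with \<open>k \<noteq> 0\<close>. Since \<open>a\<close> commutes with \<open>a\<^sup>n\<close>, also
  \<open>a\<^sup>n (a \<xi>) = u\<^sup>k (a \<xi>)\<close>; as \<open>det a\<^sup>n = 1\<close> and \<open>u\<^sup>2\<^sup>k \<noteq> 1\<close>, the two eigenvectors are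
  dependent, say \<open>c (a \<xi>) = r \<xi>\<close> with \<open>c \<noteq> 0\<close>. Iterating gives \<open>r\<^sup>n = u\<^sup>k c\<^sup>n\<close>, and
  \<open>n\<close>-th roots are unique among nonzero Laurent polynomials over \<open>\<int>\<^sub>2\<close>, so
  \<open>r = u\<^sup>j c\<close> with \<open>n j = k\<close>: a glider of \<open>a\<close>.\<close>

definition lowdeg :: "lpoly \<Rightarrow> int" where
  "lowdeg f = Min (Poly_Mapping.keys f)"

lemma lowdeg_in_keys: "f \<noteq> 0 \<Longrightarrow> lowdeg f \<in> Poly_Mapping.keys f"
  unfolding lowdeg_def by (rule Min_in) auto

lemma lowdeg_le: "k \<in> Poly_Mapping.keys f \<Longrightarrow> lowdeg f \<le> k"
  unfolding lowdeg_def by (rule Min_le) auto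

lemma lookup_lowdeg: "f \<noteq> 0 \<Longrightarrow> Poly_Mapping.lookup f (lowdeg f) = 1"
  using lowdeg_in_keys[of f] by (simp add: in_keys_iff)

lemma lookup_mult_lowdeg:
  assumes "f \<noteq> 0" "g \<noteq> 0"
  shows "Poly_Mapping.lookup (f * g) (lowdeg f + lowdeg g) = 1"
proof -
  let ?K = "lowdeg f + lowdeg g"
  have inner: "(\<Sum>q. Poly_Mapping.lookup g q when ?K = l + q) = Poly_Mapping.lookup g (?K - l)" for l
  proof -
    have "(\<lambda>q. Poly_Mapping.lookup g q when ?K = l + q)
        = (\<lambda>q. if q = ?K - l then Poly_Mapping.lookup g q else 0)"
      by (auto simp: when_def fun_eq_iff)
    then show ?thesis by (simp only: Sum_any.delta)
  qed
  have only_lowdeg: "Poly_Mapping.lookup f l * Poly_Mapping.lookup g (?K - l)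
      = (if l = lowdeg f then Poly_Mapping.lookup f l * Poly_Mapping.lookup g (?K - l) else 0)" for l
  proof (cases "Poly_Mapping.lookup f l \<noteq> 0 \<and> Poly_Mapping.lookup g (?K - l) \<noteq> 0")
    case True
    then have "lowdeg f \<le> l" "lowdeg g \<le> ?K - l" using lowdeg_le by (auto simp: in_keys_iff)
    then show ?thesis by auto
  qed auto
  have "Poly_Mapping.lookup (f * g) ?K
      = (\<Sum>l. Poly_Mapping.lookup f l * Poly_Mapping.lookup g (?K - l))"
    by (simp add: lookup_mult inner)
  also have "\<dots> = (\<Sum>l. if l = lowdeg f then Poly_Mapping.lookup f l * Poly_Mapping.lookup g (?K - l) else 0)"
    by (rule Sum_any.cong) (rule only_lowdeg)
  also have "\<dots> = 1" using assms by (simp add: lookup_lowdeg)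
  finally show ?thesis .
qed

lemma lowdeg_mult:
  assumes "f \<noteq> 0" "g \<noteq> 0"
  shows "lowdeg (f * g) = lowdeg f + lowdeg g"
proof -
  have "lowdeg f + lowdeg g \<in> Poly_Mapping.keys (f * g)"
    using lookup_mult_lowdeg[OF assms] by (simp add: in_keys_iff)
  moreover have "\<forall>k\<in>Poly_Mapping.keys (f * g). lowdeg f + lowdeg g \<le> k"
    using keys_mult[of f g] lowdeg_le by (force intro: add_mono)
  ultimately show ?thesis unfolding lowdeg_def by (intro Min_eqI) auto
qed

lemma lowdeg_one: "lowdeg 1 = 0"
proof -
  have "Poly_Mapping.keys (1::lpoly) = {0}"
    by (metis keys_single single_one zero_neq_one)
  then show ?thesis by (simp add: lowdeg_def)
qed

lemma lowdeg_power: "f \<noteq> 0 \<Longrightarrow> lowdeg (f ^ n) = int n * lowdeg f"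
  by (induction n) (auto simp: lowdeg_mult algebra_simps lowdeg_one)

lemma upow_mult: "upow a * upow b = upow (a + b)"
  by (simp add: upow_def mult_single)

lemma upow_power: "upow a ^ n = upow (int n * a)"
  by (induction n) (auto simp: mult_single algebra_simps upow_def)

lemma upow_nonzero: "upow a \<noteq> 0"
  unfolding upow_def by (metis Poly_Mapping.lookup_single_eq lookup_zero zero_neq_one)

lemma lowdeg_upow: "lowdeg (upow a) = a"
  by (simp add: lowdeg_def upow_def)

lemma upow_eq_one_iff: "upow k = 1 \<longleftrightarrow> k = 0"
  by (metis lowdeg_one lowdeg_upow single_one upow_def)

lemma lpoly_two_eq_zero: "(2::lpoly) = 0"
  by (metis bit_2_eq_0 single_numeral single_zero)

lemma of_nat_bit: "(of_nat n :: bit) = (if odd n then 1 else 0)"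
  by (induction n) auto

lemma lpoly_square_inj:
  fixes x y :: lpoly
  assumes "x\<^sup>2 = y\<^sup>2"
  shows "x = y"
proof -
  have "(x - y)\<^sup>2 = x\<^sup>2 - y\<^sup>2 + 2 * (y\<^sup>2 - x * y)"
    by (simp add: power2_eq_square algebra_simps)
  then have "(x - y)\<^sup>2 = 0" using assms lpoly_two_eq_zero by simp
  then show ?thesis by simp
qed

text \<open>For odd \<open>n\<close>, \<open>r\<^sup>n - s\<^sup>n = (r - s) G\<close> where the coefficient of \<open>G\<close> at the
  lowest possible degree \<open>(n - 1) lowdeg r\<close> is \<open>n mod 2 = 1\<close>; even \<open>n\<close> reduce to
  \<open>n/2\<close> by Frobenius.\<close>
lemma lpoly_power_inj:
  fixes r s :: lpoly
  assumes "r \<noteq> 0" "n \<ge> 1" "r ^ n = s ^ n"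
  shows "r = s"
  using assms
proof (induction n arbitrary: r s rule: less_induct)
  case (less n)
  show ?case
  proof (cases "even n")
    case True
    then obtain m where m: "n = 2 * m" by auto
    with less.prems have "m \<ge> 1" "m < n" by auto
    have "(r ^ m)\<^sup>2 = (s ^ m)\<^sup>2"
      using less.prems m by (simp add: power_mult[symmetric] mult.commute)
    then have "r ^ m = s ^ m" by (rule lpoly_square_inj)
    then show ?thesis using less.IH[OF \<open>m < n\<close> less.prems(1) \<open>m \<ge> 1\<close>] by simp
  next
    case False
    have s0: "s \<noteq> 0"
      using less.prems by (metis power_0_left power_not_zero not_one_le_zero)
    have "int n * lowdeg r = int n * lowdeg s"
      using less.prems s0 by (metis lowdeg_power)
    then have same_lowdeg: "lowdeg r = lowdeg s" using less.prems by simp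
    define G where "G = (\<Sum>i<n. s ^ (n - Suc i) * r ^ i)"
    let ?d = "int (n - 1) * lowdeg r"
    have "Poly_Mapping.lookup G ?d = (\<Sum>i<n. Poly_Mapping.lookup (s ^ (n - Suc i) * r ^ i) ?d)"
      by (simp add: G_def lookup_sum)
    also have "\<dots> = (\<Sum>i<n. 1)"
    proof (rule sum.cong)
      fix i assume "i \<in> {..<n}"
      then have "?d = lowdeg (s ^ (n - Suc i)) + lowdeg (r ^ i)"
        using same_lowdeg less.prems s0 by (simp add: lowdeg_power of_nat_diff algebra_simps)
      then show "Poly_Mapping.lookup (s ^ (n - Suc i) * r ^ i) ?d = 1"
        using lookup_mult_lowdeg[of "s ^ (n - Suc i)" "r ^ i"] less.prems s0 by simp
    qed simp
    also have "\<dots> = 1" using False by (simp add: of_nat_bit)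
    finally have "G \<noteq> 0" by auto
    moreover have "(r - s) * G = 0"
      using power_diff_sumr2[of r n s] less.prems by (simp add: G_def)
    ultimately show ?thesis by simp
  qed
qed

lemma power_eq_upow_mult_power:
  assumes "c \<noteq> 0" "n \<ge> 1" "r ^ n = upow k * c ^ n"
  shows "\<exists>j. int n * j = k \<and> r = upow j * c"
proof -
  have r0: "r \<noteq> 0"
    using assms upow_nonzero by (metis mult_eq_0_iff power_eq_0_iff not_one_le_zero power_0_left)
  define j where "j = lowdeg r - lowdeg c"
  have "int n * lowdeg r = k + int n * lowdeg c"
    using arg_cong[OF assms(3), of lowdeg] r0 assms(1) upow_nonzero
    by (simp add: lowdeg_power lowdeg_mult lowdeg_upow)
  then have k: "k = int n * j" by (simp add: j_def algebra_simps)
  have "r ^ n = (upow j * c) ^ n"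
    using assms(3) by (simp add: power_mult_distrib upow_power k)
  then have "r = upow j * c" using lpoly_power_inj r0 assms(2) by blast
  with k show ?thesis by blast
qed

lemma mpow_0: "mpow a 0 = mat 1"
  by (simp add: mpow_def)

lemma mpow_Suc: "mpow a (Suc m) = a ** mpow a m"
  by (simp add: mpow_def)

lemma mpow_1: "mpow a 1 = a"
  by (simp add: mpow_def)

lemma mpow_add: "mpow a (m + l) = mpow a m ** mpow a l"
  by (induction m) (auto simp: mpow_0 mpow_Suc matrix_mul_assoc)

lemma mpow_mult: "mpow (mpow a n) p = mpow a (n * p)"
  by (induction p) (auto simp: mpow_0 mpow_Suc mpow_add)

lemma mpow_commute: "a ** mpow a n = mpow a n ** a"
  by (metis mpow_1 mpow_Suc mpow_add Suc_eq_plus1)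

lemma det_mpow: "det a = 1 \<Longrightarrow> det (mpow a n) = 1"
  by (induction n) (auto simp: mpow_0 mpow_Suc det_mul)

lemma matrix_vector_mult_2:
  "((A::'a::comm_ring_1^2^2) *v v) $ i = A$i$1 * v$1 + A$i$2 * v$2"
  by (simp add: matrix_vector_mult_def sum_2)

lemma vec_eq_2: "(v::'a^2) = w \<longleftrightarrow> v$1 = w$1 \<and> v$2 = w$2"
  by (simp add: vec_eq_iff forall_2)

lemma matrix_vector_mult_smult_2: "(A::'a::comm_ring_1^2^2) *v (c *s x) = c *s (A *v x)"
  by (simp add: vec_eq_2 matrix_vector_mult_2 algebra_simps)

text \<open>The determinant of \<open>[x y]\<close> is multiplied by \<open>det B l\<^sup>2\<close> when \<open>B\<close> is applied.\<close>
lemma common_eigenvectors_dependent_2: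
  fixes B :: "'a::idom^2^2"
  assumes "det B = 1" "B *v x = l *s x" "B *v y = l *s y" "l * l \<noteq> 1"
  shows "x$1 * y$2 - x$2 * y$1 = 0"
proof -
  let ?D = "x$1 * y$2 - x$2 * y$1"
  have x1: "B$1$1*x$1 + B$1$2*x$2 = l * x$1" and x2: "B$2$1*x$1 + B$2$2*x$2 = l * x$2"
    using assms(2) unfolding vec_eq_2 by (simp_all add: matrix_vector_mult_2)
  have y1: "B$1$1*y$1 + B$1$2*y$2 = l * y$1" and y2: "B$2$1*y$1 + B$2$2*y$2 = l * y$2"
    using assms(3) unfolding vec_eq_2 by (simp_all add: matrix_vector_mult_2)
  have "(B$1$1*x$1 + B$1$2*x$2) * (B$2$1*y$1 + B$2$2*y$2)
      - (B$2$1*x$1 + B$2$2*x$2) * (B$1$1*y$1 + B$1$2*y$2)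
      = (B$1$1*B$2$2 - B$1$2*B$2$1) * ?D"
    by algebra
  then have "(l * l) * ?D = ?D"
    using assms(1) unfolding x1 x2 y1 y2 det_2 by (simp add: algebra_simps)
  then have "(l * l - 1) * ?D = 0" by (simp add: algebra_simps)
  with assms(4) show ?thesis by simp
qed

lemma dependent_imp_scaled_eq_2:
  fixes x y :: "'a::comm_ring_1^2"
  assumes "x \<noteq> 0" "x$1 * y$2 - x$2 * y$1 = 0"
  obtains c r where "c \<noteq> 0" "c *s y = r *s x"
proof (cases "x$1 = 0")
  case False
  have "x$1 *s y = y$1 *s x" using assms(2) unfolding vec_eq_2 by (simp add: algebra_simps)
  with False that show ?thesis by blast
next
  case True
  then have "x$2 \<noteq> 0" using assms(1) by (auto simp: vec_eq_2)
  moreover have "x$2 *s y = y$2 *s x" using assms(2) True unfolding vec_eq_2 by (simp add: algebra_simps)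
  ultimately show ?thesis using that by blast
qed

lemma scaled_eigen_mpow:
  assumes "c *s (a *v \<xi>) = r *s \<xi>"
  shows "c ^ m *s (mpow a m *v \<xi>) = r ^ m *s \<xi>"
proof (induction m)
  case 0
  then show ?case by (simp add: mpow_0)
next
  case (Suc m)
  have "c ^ Suc m *s (mpow a (Suc m) *v \<xi>) = c *s (a *v (c ^ m *s (mpow a m *v \<xi>)))"
    by (simp add: mpow_Suc matrix_vector_mul_assoc[symmetric] matrix_vector_mult_smult_2
        vector_smult_assoc)
  also have "\<dots> = r ^ m *s (c *s (a *v \<xi>))"
    using Suc by (simp add: matrix_vector_mult_smult_2 vector_smult_assoc mult.commute)
  also have "\<dots> = r ^ Suc m *s \<xi>"
    using assms by (simp add: vector_smult_assoc mult.commute)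
  finally show ?case .
qed

lemma glider_of_scaled_eigen:
  assumes "c \<noteq> 0" "c *s (a *v \<xi>) = r *s \<xi>" "\<xi> \<noteq> 0"
    and "mpow a n *v \<xi> = upow k *s \<xi>" "n \<ge> 1" "k \<noteq> 0"
  shows "has_gliders a"
proof -
  have "(c ^ n * upow k) *s \<xi> = r ^ n *s \<xi>"
    using scaled_eigen_mpow[OF assms(2), of n] assms(4) by (simp add: vector_smult_assoc)
  moreover obtain i where "\<xi> $ i \<noteq> 0" using assms(3) by (auto simp: vec_eq_iff)
  ultimately have "r ^ n = upow k * c ^ n"
    by (metis mult.commute mult_right_cancel vector_smult_component)
  then obtain j where j: "int n * j = k" "r = upow j * c"
    using power_eq_upow_mult_power[OF assms(1,5)] by blast
  have "a *v \<xi> = upow j *s \<xi>"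
    using assms(1,2) unfolding vec_eq_2 j(2) by (simp add: algebra_simps)
  moreover have "j \<noteq> 0" using j(1) assms(6) by auto
  ultimately show ?thesis unfolding has_gliders_def using assms(3) by blast
qed

lemma has_gliders_mpow_imp_has_gliders:
  assumes "det a = 1" "n \<ge> 1" "has_gliders (mpow a n)"
  shows "has_gliders a"
proof -
  obtain \<xi> k where \<xi>: "\<xi> \<noteq> 0" and k: "k \<noteq> 0" and eigen: "mpow a n *v \<xi> = upow k *s \<xi>"
    using assms(3) by (auto simp: has_gliders_def)
  have eigen_a: "mpow a n *v (a *v \<xi>) = upow k *s (a *v \<xi>)"
    by (metis matrix_vector_mul_assoc mpow_commute eigen matrix_vector_mult_smult_2)
  have "upow k * upow k \<noteq> 1" using k by (simp add: upow_mult upow_eq_one_iff)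
  then have "\<xi>$1 * (a *v \<xi>)$2 - \<xi>$2 * (a *v \<xi>)$1 = 0"
    using common_eigenvectors_dependent_2[OF det_mpow[OF assms(1)] eigen eigen_a] by blast
  then obtain c r where "c \<noteq> 0" "c *s (a *v \<xi>) = r *s \<xi>"
    using dependent_imp_scaled_eq_2[OF \<xi>] by blast
  then show ?thesis using glider_of_scaled_eigen \<xi> eigen assms(2) k by blast
qed

lemma periodic_mpow_imp_periodic:
  assumes "n \<ge> 1" "periodic (mpow a n)"
  shows "periodic a"
proof -
  obtain p where "p \<ge> 1" "mpow a (n * p) = mat 1"
    using assms(2) by (auto simp: periodic_def mpow_mult)
  moreover have "n * p \<ge> 1" using \<open>p \<ge> 1\<close> assms(1) by simp
  ultimately show ?thesis unfolding periodic_def by blast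
qed

theorem mainTheorem7:
  fixes a :: lmat and n :: nat
  assumes "csca a" and "fractal a" and "n \<ge> 1"
  shows "fractal (mpow a n)"
proof -
  have "det a = 1" using assms(1) by (simp add: csca_def)
  then show ?thesis
    using assms(2,3) periodic_mpow_imp_periodic has_gliders_mpow_imp_has_gliders
    by (auto simp: fractal_def)
qed

end
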